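(* Let $\mathcal{A}'$ be the localization of $\mathcal{A}=W(2n|n)$ at the multiplicative set $D$ generated by $\{H+k : k\in\mathbb{Z}\}$, let $I'=\mathcal{A}'X+\mathcal{A}'E$, and let $M'=\mathcal{A}'/I'$ as a left $\mathcal{A}'$-module. Then $M'$ is locally $\mathfrak{g}_+$-finite, i.e. for every $v\in M'$ the subspace $U(\mathfrak{g}_+)v$ (where $U(\mathfrak{g}_+)$ is the subalgebra of $\mathcal{A}'$ generated by $X$ and $E$) is finite-dimensional.
   Context: Fix $n\ge1$ and an invertible complex matrix $\eta=(\eta^{ij})$ with $\eta^{ij}=\eta^{ji}$ and inverse $(\eta_{ij})$. $W(2n|n)$ is the associative superalgebra generated by even $x^1,\dots,x^n,\partial_1,\dots,\partial_n$ and odd $\gamma^1,\dots,\gamma^n$ with relations $x^ix^j=x^jx^i$, $\partial_i\partial_j=\partial_j\partial_i$, $\partial_ix^j-x^j\partial_i=\delta_i^j$, $\gamma^i$ commuting with all $x^j,\partial_j$, and $\gamma^i\gamma^j+\gamma^j\gamma^i=2\eta^{ij}$. Repeated indices are summed; $x_i=\eta_{ij}x^j$, $\partial^i=\eta^{ij}\partial_j$. Set $X=\frac{\sqrt{-1}}{\sqrt2}\gamma^i\partial_i$, $H=-\frac12(\partial_ix^i+x^i\partial_i)$, $E=-\frac12\partial^i\partial_i=X^2$, and $\mathfrak{g}_+=\mathbb{C}X\oplus\mathbb{C}E$. *)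

theory Defs
  imports Complex_Main
begin

text \<open>Indices 1..n of the paper are rendered as 0..n-1.
  The superalgebra W(2n|n) is characterised up to isomorphism by its presentation
  together with the PBW basis (normally ordered monomials are linearly independent);
  the localisation A' is characterised up to isomorphism as the (left) ring of fractions
  of A with respect to the multiplicative set D.\<close>

definition sym_invertible :: "nat \<Rightarrow> (nat \<Rightarrow> nat \<Rightarrow> complex) \<Rightarrow> bool" where
  "sym_invertible n eta \<longleftrightarrow>
     (\<forall>i<n. \<forall>j<n. eta i j = eta j i) \<and>
     (\<exists>etainv :: nat \<Rightarrow> nat \<Rightarrow> complex. \<forall>i<n. \<forall>k<n.
        (\<Sum>j<n. eta i j * etainv j k) = (if i = k then 1 else 0) \<and>
        (\<Sum>j<n. etainv i j * eta j k) = (if i = k then 1 else 0))"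

text \<open>A central embedding of the complex scalars: makes a ring a complex algebra.\<close>
definition is_scalar_emb :: "(complex \<Rightarrow> 'w::ring_1) \<Rightarrow> bool" where
  "is_scalar_emb c \<longleftrightarrow> c 1 = 1 \<and> (\<forall>a b. c (a + b) = c a + c b) \<and>
     (\<forall>a b. c (a * b) = c a * c b) \<and> (\<forall>a w. c a * w = w * c a)"

inductive_set gen_alg :: "(complex \<Rightarrow> 'w::ring_1) \<Rightarrow> 'w set \<Rightarrow> 'w set"
  for c :: "complex \<Rightarrow> 'w" and G :: "'w set" where
  scal: "c z \<in> gen_alg c G"
| gen: "g \<in> G \<Longrightarrow> g \<in> gen_alg c G"
| add: "a \<in> gen_alg c G \<Longrightarrow> b \<in> gen_alg c G \<Longrightarrow> a + b \<in> gen_alg c G"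
| mult: "a \<in> gen_alg c G \<Longrightarrow> b \<in> gen_alg c G \<Longrightarrow> a * b \<in> gen_alg c G"

definition W_relations ::
  "nat \<Rightarrow> (nat \<Rightarrow> nat \<Rightarrow> complex) \<Rightarrow> (complex \<Rightarrow> 'w::ring_1) \<Rightarrow>
   (nat \<Rightarrow> 'w) \<Rightarrow> (nat \<Rightarrow> 'w) \<Rightarrow> (nat \<Rightarrow> 'w) \<Rightarrow> bool" where
  "W_relations n eta c x d g \<longleftrightarrow> (\<forall>i<n. \<forall>j<n.
      x i * x j = x j * x i \<and>
      d i * d j = d j * d i \<and>
      d i * x j - x j * d i = c (if i = j then 1 else 0) \<and>
      g i * x j = x j * g i \<and>
      g i * d j = d j * g i \<and>
      g i * g j + g j * g i = c (2 * eta i j))"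

definition pbw_mono ::
  "nat \<Rightarrow> (nat \<Rightarrow> 'w::ring_1) \<Rightarrow> (nat \<Rightarrow> 'w) \<Rightarrow> (nat \<Rightarrow> 'w) \<Rightarrow>
   (nat \<Rightarrow> nat) \<times> (nat \<Rightarrow> nat) \<times> nat set \<Rightarrow> 'w" where
  "pbw_mono n x d g m = (case m of (alpha, beta, S) \<Rightarrow>
      foldr (\<lambda>i r. x i ^ alpha i * r) [0..<n] 1 *
      foldr (\<lambda>i r. d i ^ beta i * r) [0..<n] 1 *
      foldr (\<lambda>i r. g i * r) (sorted_list_of_set S) 1)"

definition pbw_indep ::
  "nat \<Rightarrow> (complex \<Rightarrow> 'w::ring_1) \<Rightarrow> (nat \<Rightarrow> 'w) \<Rightarrow> (nat \<Rightarrow> 'w) \<Rightarrow> (nat \<Rightarrow> 'w) \<Rightarrow> bool" where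
  "pbw_indep n c x d g \<longleftrightarrow>
     (\<forall>F coef. finite F \<and>
        (\<forall>(alpha, beta, S) \<in> F. (\<forall>i\<ge>n. alpha i = 0 \<and> beta i = 0) \<and> S \<subseteq> {..<n}) \<and>
        (\<Sum>m\<in>F. c (coef m) * pbw_mono n x d g m) = 0
        \<longrightarrow> (\<forall>m\<in>F. coef m = 0))"

text \<open>(c, x, d, g) present W(2n|n): a complex algebra generated by x^i, d_i, gamma^i
  subject to the defining relations, with no further relations (PBW independence).\<close>
definition is_W ::
  "nat \<Rightarrow> (nat \<Rightarrow> nat \<Rightarrow> complex) \<Rightarrow> (complex \<Rightarrow> 'w::ring_1) \<Rightarrow>
   (nat \<Rightarrow> 'w) \<Rightarrow> (nat \<Rightarrow> 'w) \<Rightarrow> (nat \<Rightarrow> 'w) \<Rightarrow> bool" where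
  "is_W n eta c x d g \<longleftrightarrow> is_scalar_emb c \<and> W_relations n eta c x d g \<and>
     gen_alg c (x ` {..<n} \<union> d ` {..<n} \<union> g ` {..<n}) = UNIV \<and>
     pbw_indep n c x d g"

definition Xop :: "nat \<Rightarrow> (complex \<Rightarrow> 'w::ring_1) \<Rightarrow> (nat \<Rightarrow> 'w) \<Rightarrow> (nat \<Rightarrow> 'w) \<Rightarrow> 'w" where
  "Xop n c d g = c (\<i> / complex_of_real (sqrt 2)) * (\<Sum>i<n. g i * d i)"

definition Hop :: "nat \<Rightarrow> (complex \<Rightarrow> 'w::ring_1) \<Rightarrow> (nat \<Rightarrow> 'w) \<Rightarrow> (nat \<Rightarrow> 'w) \<Rightarrow> 'w" where
  "Hop n c x d = c (- 1 / 2) * (\<Sum>i<n. d i * x i + x i * d i)"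

definition Eop :: "nat \<Rightarrow> (nat \<Rightarrow> nat \<Rightarrow> complex) \<Rightarrow> (complex \<Rightarrow> 'w::ring_1) \<Rightarrow> (nat \<Rightarrow> 'w) \<Rightarrow> 'w" where
  "Eop n eta c d = c (- 1 / 2) * (\<Sum>i<n. \<Sum>j<n. c (eta i j) * d j * d i)"

inductive_set Dset :: "'w::ring_1 \<Rightarrow> 'w set" for H :: 'w where
  one: "1 \<in> Dset H"
| step: "s \<in> Dset H \<Longrightarrow> (H + of_int k) * s \<in> Dset H"

definition is_localization :: "'w::ring_1 set \<Rightarrow> ('w \<Rightarrow> 'l::ring_1) \<Rightarrow> bool" where
  "is_localization D phi \<longleftrightarrow>
     phi 1 = 1 \<and> (\<forall>a b. phi (a + b) = phi a + phi b) \<and> (\<forall>a b. phi (a * b) = phi a * phi b) \<and>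
     (\<forall>s\<in>D. \<exists>t. t * phi s = 1 \<and> phi s * t = 1) \<and>
     (\<forall>y. \<exists>s\<in>D. \<exists>a t. t * phi s = 1 \<and> y = t * phi a) \<and>
     (\<forall>a. phi a = 0 \<longleftrightarrow> (\<exists>s\<in>D. s * a = 0))"

definition left_ideal2 :: "'l::ring_1 \<Rightarrow> 'l \<Rightarrow> 'l set" where
  "left_ideal2 X E = {a * X + b * E | a b. True}"

text \<open>A'/I' is locally finite for the subalgebra U generated by X and E:
  for each class v = [w], the subspace U v is contained in (hence is) a finite-dimensional
  subspace, i.e. lies in the span of finitely many classes [b].\<close>
definition locally_finite_quot :: "(complex \<Rightarrow> 'l::ring_1) \<Rightarrow> 'l \<Rightarrow> 'l \<Rightarrow> 'l set \<Rightarrow> bool" where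
  "locally_finite_quot sc X E I \<longleftrightarrow>
     (\<forall>w. \<exists>B. finite B \<and>
        (\<forall>u\<in>gen_alg sc {X, E}. \<exists>f. u * w - (\<Sum>b\<in>B. sc (f b) * b) \<in> I))"

end

theory Submission
  imports Defs
begin

text \<open>Every element of A' is a left fraction t phi(a) with t the inverse of some s \<in> D.
  Since [H, E] = 2E, we have E (H + k) = (H + k - 2) E, so powers of E pass through
  denominators: E^K s^-1 = s'^-1 E^K with s' \<in> D. In A itself E^K a \<in> A E for K large:
  the commutator [E, x^k] lies in the commutative subalgebra generated by the d_i, which also
  contains E, and the generators d_i, gamma^i commute with E. Hence E^K v \<in> I' for every
  v \<in> A', and since X^2 = E, U(g+) v is spanned modulo I' by the E^k v and X E^k v, k < K.\<close>

locale scalar_emb =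
  fixes c :: "complex \<Rightarrow> 'a::ring_1"
  assumes is_scalar_emb: "is_scalar_emb c"
begin

lemma scalar_one [simp]: "c 1 = 1"
  and scalar_add: "c (a + b) = c a + c b"
  and scalar_mult: "c (a * b) = c a * c b"
  and scalar_central: "c a * w = w * c a"
  using is_scalar_emb unfolding is_scalar_emb_def by blast+

lemma scalar_zero [simp]: "c 0 = 0"
  using scalar_add[of 0 0] by simp

lemma scalar_minus: "c (- a) = - c a"
  using scalar_add[of a "- a"] by (simp add: minus_unique)

lemma scalar_of_nat [simp]: "c (of_nat k) = of_nat k"
  by (induction k) (simp_all add: scalar_add)

lemma scalar_numeral [simp]: "c (numeral k) = numeral k"
  using scalar_of_nat[of "numeral k"] by simp

lemma scalar_mult_assoc: "c a * (c b * w) = c (a * b) * w"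
  by (simp add: scalar_mult mult.assoc)

lemma scalar_mult_left_commute: "w * (c a * v) = c a * (w * v)"
proof -
  have "w * (c a * v) = (w * c a) * v" by (rule mult.assoc[symmetric])
  also have "\<dots> = c a * (w * v)" by (simp only: scalar_central[of a w, symmetric] mult.assoc)
  finally show ?thesis .
qed

end

definition commutator :: "'a::ring \<Rightarrow> 'a \<Rightarrow> 'a" where
  "commutator a b = a * b - b * a"

lemma commutator_sum_left: "commutator (sum f S) b = (\<Sum>i\<in>S. commutator (f i) b)"
  unfolding commutator_def by (simp add: sum_distrib_left sum_distrib_right sum_subtractf)

lemma commutator_sum_right: "commutator a (sum f S) = (\<Sum>i\<in>S. commutator a (f i))"
  unfolding commutator_def by (simp add: sum_distrib_left sum_distrib_right sum_subtractf)

lemma commutator_add_left: "commutator (a + a') b = commutator a b + commutator a' b"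
  unfolding commutator_def by (simp add: algebra_simps)

lemma commutator_mult_right: "commutator a (b * b') = commutator a b * b' + b * commutator a b'"
  unfolding commutator_def by (simp add: algebra_simps)

lemma commutator_one_left [simp]: "commutator 1 b = (0 :: 'a::ring_1)"
  unfolding commutator_def by simp

lemma (in scalar_emb) commutator_scalar_left: "commutator (c z * a) b = c z * commutator a b"
  unfolding commutator_def by (simp add: right_diff_distrib mult.assoc scalar_mult_left_commute)

lemma (in scalar_emb) commutator_scalar_right: "commutator a (c z * b) = c z * commutator a b"
  unfolding commutator_def by (simp add: right_diff_distrib mult.assoc scalar_mult_left_commute)

context scalar_emb
begin

lemma gen_alg_zero: "0 \<in> gen_alg c G"
  using gen_alg.scal[of c 0 G] by simp

lemma gen_alg_sum: "(\<And>i. i \<in> S \<Longrightarrow> f i \<in> gen_alg c G) \<Longrightarrow> sum f S \<in> gen_alg c G"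
  by (induction S rule: infinite_finite_induct) (simp_all add: gen_alg_zero gen_alg.add)

lemma gen_alg_commute:
  assumes "a \<in> gen_alg c G" and "\<And>g. g \<in> G \<Longrightarrow> p * g = g * p"
  shows "p * a = a * p"
  using assms(1)
proof (induction a rule: gen_alg.induct)
  case (scal z)
  then show ?case by (simp add: scalar_central)
next
  case (gen g)
  then show ?case by (rule assms(2))
next
  case (add a b)
  then show ?case by (simp add: distrib_left distrib_right)
next
  case (mult a b)
  then show ?case by (metis mult.assoc)
qed

lemma gen_alg_commutative:
  assumes "a \<in> gen_alg c G" and "b \<in> gen_alg c G"
    and "\<And>g h. g \<in> G \<Longrightarrow> h \<in> G \<Longrightarrow> g * h = h * g"
  shows "a * b = b * a"
proof -
  have "b * g = g * b" if "g \<in> G" for g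
    using gen_alg_commute[OF assms(2)] assms(3) that by metis
  then show ?thesis using gen_alg_commute[OF assms(1)] by metis
qed

lemma gen_alg_commutator_closed:
  assumes "a \<in> gen_alg c G" and "\<And>g. g \<in> G \<Longrightarrow> commutator g y \<in> gen_alg c G"
  shows "commutator a y \<in> gen_alg c G"
  using assms(1)
proof (induction a rule: gen_alg.induct)
  case (scal z)
  then show ?case by (simp add: commutator_def scalar_central gen_alg_zero)
next
  case (gen g)
  then show ?case by (rule assms(2))
next
  case (add a b)
  then show ?case by (simp add: commutator_add_left gen_alg.add)
next
  case (mult a b)
  have "commutator (a * b) y = a * commutator b y + commutator a y * b"
    unfolding commutator_def by (simp add: algebra_simps)
  then show ?case using mult by (simp add: gen_alg.add gen_alg.mult)
qed

end

section \<open>Moving powers of an element to the right\<close>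

text \<open>The quantifier over m makes the property closed under products; only m = 1 is used
  in the end, giving e^(N+1) a \<in> A e.\<close>
definition absorbs_powers :: "'a::ring_1 \<Rightarrow> 'a \<Rightarrow> bool" where
  "absorbs_powers e a \<longleftrightarrow> (\<exists>N. \<forall>m. \<exists>b. e ^ (m + N) * a = b * e ^ m)"

lemma absorbs_powers_if_commute:
  assumes "a * e = e * a"
  shows "absorbs_powers e a"
proof -
  have "e ^ (m + 0) * a = a * e ^ m" for m
    using power_commuting_commutes[of e a, OF assms[symmetric]] by simp
  then show ?thesis unfolding absorbs_powers_def by blast
qed

lemma absorbs_powers_add:
  assumes "absorbs_powers e a" and "absorbs_powers e a'"
  shows "absorbs_powers e (a + a')"
proof -
  obtain N where N: "\<And>m. \<exists>b. e ^ (m + N) * a = b * e ^ m"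
    using assms(1) unfolding absorbs_powers_def by blast
  obtain N' where N': "\<And>m. \<exists>b. e ^ (m + N') * a' = b * e ^ m"
    using assms(2) unfolding absorbs_powers_def by blast
  have "\<exists>b. e ^ (m + (N + N')) * (a + a') = b * e ^ m" for m
  proof -
    obtain b where b: "e ^ ((N' + m) + N) * a = b * e ^ (N' + m)" using N by blast
    obtain b' where b': "e ^ ((N + m) + N') * a' = b' * e ^ (N + m)" using N' by blast
    have "e ^ (m + (N + N')) * (a + a') = e ^ ((N' + m) + N) * a + e ^ ((N + m) + N') * a'"
      by (simp add: distrib_left add_ac)
    also have "\<dots> = (b * e ^ N' + b' * e ^ N) * e ^ m"
      unfolding b b' by (simp only: power_add distrib_right mult.assoc)
    finally show ?thesis by blast
  qed
  then show ?thesis unfolding absorbs_powers_def by blast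
qed

lemma absorbs_powers_mult:
  assumes "absorbs_powers e a" and "absorbs_powers e a'"
  shows "absorbs_powers e (a * a')"
proof -
  obtain N where N: "\<And>m. \<exists>b. e ^ (m + N) * a = b * e ^ m"
    using assms(1) unfolding absorbs_powers_def by blast
  obtain N' where N': "\<And>m. \<exists>b. e ^ (m + N') * a' = b * e ^ m"
    using assms(2) unfolding absorbs_powers_def by blast
  have "\<exists>b. e ^ (m + (N' + N)) * (a * a') = b * e ^ m" for m
  proof -
    obtain b where b: "e ^ ((m + N') + N) * a = b * e ^ (m + N')" using N by blast
    obtain b' where b': "e ^ (m + N') * a' = b' * e ^ m" using N' by blast
    have "e ^ (m + (N' + N)) * (a * a') = (e ^ ((m + N') + N) * a) * a'"
      by (simp add: mult.assoc add_ac)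
    also have "\<dots> = (b * b') * e ^ m"
      unfolding b by (simp add: mult.assoc b')
    finally show ?thesis by blast
  qed
  then show ?thesis unfolding absorbs_powers_def by blast
qed

text \<open>If [e, a] commutes with e, then e^(m+1) a = (a e + (m + 1) [e, a]) e^m.\<close>
lemma absorbs_powers_if_commutator_commutes:
  assumes comm: "commutator e a * e = e * commutator e a"
  shows "absorbs_powers e a"
proof -
  define L where "L = commutator e a"
  have eL: "e * (of_nat k * L) = of_nat k * L * e" for k
  proof -
    have "e * (of_nat k * L) = (of_nat k * e) * L"
      by (simp only: mult.assoc[symmetric] mult_of_nat_commute[of k e])
    also have "\<dots> = of_nat k * L * e" using comm unfolding L_def by (simp only: mult.assoc)
    finally show ?thesis .
  qed
  have "e ^ Suc m * a = (a * e + of_nat (Suc m) * L) * e ^ m" for m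
  proof (induction m)
    case 0
    then show ?case by (simp add: L_def commutator_def)
  next
    case (Suc m)
    have "e ^ Suc (Suc m) * a = e * ((a * e + of_nat (Suc m) * L) * e ^ m)"
      by (simp only: power_Suc[of e "Suc m"] mult.assoc Suc)
    also have "\<dots> = ((e * a) * e + e * (of_nat (Suc m) * L)) * e ^ m"
      by (simp only: distrib_left distrib_right mult.assoc)
    also have "\<dots> = ((a * e + L) * e + of_nat (Suc m) * L * e) * e ^ m"
      by (simp only: eL) (simp add: L_def commutator_def)
    also have "\<dots> = (a * e + of_nat (Suc (Suc m)) * L) * e ^ Suc m"
      by (simp add: algebra_simps)
    finally show ?case .
  qed
  then show ?thesis unfolding absorbs_powers_def by (metis Suc_eq_plus1)
qed

lemma absorbs_powers_right_multiple:
  assumes "absorbs_powers e a"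
  shows "\<exists>K b. e ^ K * a = b * e"
proof -
  obtain N b where "e ^ (1 + N) * a = b * e ^ 1"
    using assms unfolding absorbs_powers_def by blast
  then show ?thesis by (metis power_one_right)
qed

lemma (in scalar_emb) gen_alg_absorbs_powers:
  assumes "a \<in> gen_alg c G" and "\<And>g. g \<in> G \<Longrightarrow> absorbs_powers e g"
  shows "absorbs_powers e a"
  using assms(1)
proof (induction a rule: gen_alg.induct)
  case (scal z)
  then show ?case by (simp add: absorbs_powers_if_commute scalar_central)
next
  case (gen g)
  then show ?case by (rule assms(2))
next
  case (add a b)
  then show ?case by (intro absorbs_powers_add)
next
  case (mult a b)
  then show ?case by (intro absorbs_powers_mult)
qed

lemma Dset_shift:
  fixes e h :: "'a::ring_1"
  assumes "e * h = (h + of_int j) * e"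
  shows "s \<in> Dset h \<Longrightarrow> \<exists>s'\<in>Dset h. e * s = s' * e"
proof (induction s rule: Dset.induct)
  case one
  then show ?case using Dset.one by force
next
  case (step s k)
  then obtain s' where "s' \<in> Dset h" and s': "e * s = s' * e" by blast
  have "e * (h + of_int k) = (h + of_int (j + k)) * e"
    using assms by (simp add: algebra_simps mult_of_int_commute)
  then have "e * ((h + of_int k) * s) = ((h + of_int (j + k)) * s') * e"
    by (simp add: flip: mult.assoc) (simp add: s' mult.assoc)
  then show ?case using Dset.step[OF \<open>s' \<in> Dset h\<close>] by blast
qed

section \<open>The relations of W(2n|n)\<close>

locale W_rels = scalar_emb c for c :: "complex \<Rightarrow> 'a::ring_1" +
  fixes n :: nat and eta :: "nat \<Rightarrow> nat \<Rightarrow> complex" and x d g :: "nat \<Rightarrow> 'a"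
  assumes W_relations: "W_relations n eta c x d g"
begin

lemma d_comm: "i < n \<Longrightarrow> j < n \<Longrightarrow> d i * d j = d j * d i"
  and d_x_commutator: "i < n \<Longrightarrow> j < n \<Longrightarrow> commutator (d i) (x j) = c (if i = j then 1 else 0)"
  and gamma_d_comm: "i < n \<Longrightarrow> j < n \<Longrightarrow> g i * d j = d j * g i"
  and gamma_anticomm: "i < n \<Longrightarrow> j < n \<Longrightarrow> g i * g j + g j * g i = c (2 * eta i j)"
  using W_relations unfolding W_relations_def commutator_def by blast+

lemma Eop_in_diff_alg: "Eop n eta c d \<in> gen_alg c (d ` {..<n})"
  unfolding Eop_def
  by (intro gen_alg.mult gen_alg.scal gen_alg_sum) (auto intro: gen_alg.gen)

lemma commute_Eop:
  assumes "\<And>j. j < n \<Longrightarrow> p * d j = d j * p"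
  shows "p * Eop n eta c d = Eop n eta c d * p"
  using Eop_in_diff_alg by (rule gen_alg_commute) (auto simp: assms)

lemma commutator_Eop_x:
  assumes "k < n"
  shows "commutator (Eop n eta c d) (x k) \<in> gen_alg c (d ` {..<n})"
  using Eop_in_diff_alg
proof (rule gen_alg_commutator_closed)
  fix p assume "p \<in> d ` {..<n}"
  then show "commutator p (x k) \<in> gen_alg c (d ` {..<n})"
    using assms gen_alg.scal[of c _ "d ` {..<n}"] by (auto simp: d_x_commutator)
qed

lemma absorbs_powers_Eop:
  assumes "a \<in> gen_alg c (x ` {..<n} \<union> d ` {..<n} \<union> g ` {..<n})"
  shows "absorbs_powers (Eop n eta c d) a"
  using assms
proof (rule gen_alg_absorbs_powers)
  fix p assume "p \<in> x ` {..<n} \<union> d ` {..<n} \<union> g ` {..<n}"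
  then consider (x) k where "k < n" "p = x k" | (d) k where "k < n" "p = d k"
    | (g) k where "k < n" "p = g k"
    by blast
  then show "absorbs_powers (Eop n eta c d) p"
  proof cases
    case x
    have "commutator (Eop n eta c d) (x k) * Eop n eta c d = Eop n eta c d * commutator (Eop n eta c d) (x k)"
      using commutator_Eop_x[OF \<open>k < n\<close>] Eop_in_diff_alg
      by (rule gen_alg_commutative) (auto simp: d_comm)
    then show ?thesis unfolding x(2) by (rule absorbs_powers_if_commutator_commutes)
  next
    case d
    then show ?thesis by (intro absorbs_powers_if_commute commute_Eop) (simp add: d_comm)
  next
    case g
    then show ?thesis by (intro absorbs_powers_if_commute commute_Eop) (simp add: gamma_d_comm)
  qed
qed

lemma gamma_d_sum_square:
  "(\<Sum>i<n. g i * d i) * (\<Sum>i<n. g i * d i) = (\<Sum>i<n. \<Sum>j<n. c (eta i j) * (d i * d j))"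
proof -
  define T where "T = (\<Sum>i<n. \<Sum>j<n. g i * g j * (d i * d j))"
  have square: "(\<Sum>i<n. g i * d i) * (\<Sum>i<n. g i * d i) = T"
    unfolding T_def sum_product
  proof (intro sum.cong refl)
    fix i j assume "i \<in> {..<n}" "j \<in> {..<n}"
    then have "d i * g j = g j * d i" using gamma_d_comm by simp
    then show "g i * d i * (g j * d j) = g i * g j * (d i * d j)"
      by (simp add: mult.assoc) (simp flip: mult.assoc)
  qed
  have double: "T + T = 2 * (\<Sum>i<n. \<Sum>j<n. c (eta i j) * (d i * d j))"
  proof -
    have "T = (\<Sum>i<n. \<Sum>j<n. g j * g i * (d i * d j))"
      unfolding T_def by (subst sum.swap) (intro sum.cong refl, simp add: d_comm)
    then have "T + T = (\<Sum>i<n. \<Sum>j<n. g i * g j * (d i * d j))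
        + (\<Sum>i<n. \<Sum>j<n. g j * g i * (d i * d j))"
      by (simp only: T_def)
    also have "\<dots> = (\<Sum>i<n. \<Sum>j<n. (g i * g j + g j * g i) * (d i * d j))"
      by (simp only: sum.distrib[symmetric] distrib_right)
    also have "\<dots> = (\<Sum>i<n. \<Sum>j<n. c 2 * (c (eta i j) * (d i * d j)))"
      by (intro sum.cong refl) (simp add: gamma_anticomm scalar_mult mult.assoc)
    finally show ?thesis by (simp add: sum_distrib_left)
  qed
  have half: "c (1 / 2) * (2 * w) = w" for w
    using scalar_mult_assoc[of "1 / 2" 2 w] by simp
  have "T = c (1 / 2) * (T + T)" using half[of T] by (simp only: mult_2)
  then show ?thesis unfolding square double half .
qed

lemma Xop_square: "Xop n c d g * Xop n c d g = Eop n eta c d"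
proof -
  have "(\<i> / complex_of_real (sqrt 2)) * (\<i> / complex_of_real (sqrt 2)) = - 1 / 2"
    by (simp add: field_simps flip: of_real_mult)
  then have "Xop n c d g * Xop n c d g
      = c (- 1 / 2) * ((\<Sum>i<n. g i * d i) * (\<Sum>i<n. g i * d i))"
    unfolding Xop_def by (simp only: mult.assoc scalar_mult_left_commute[of "\<Sum>i<n. g i * d i"]
        scalar_mult_assoc)
  also have "\<dots> = Eop n eta c d"
    unfolding gamma_d_sum_square Eop_def
    by (intro arg_cong[where f = "\<lambda>t. c (- 1 / 2) * t"] sum.cong refl) (simp add: d_comm mult.assoc)
  finally show ?thesis .
qed

lemma commutator_number_d:
  assumes "j < n"
  shows "commutator (\<Sum>k<n. x k * d k) (d j) = - d j"
proof -
  have "commutator (x k * d k) (d j) = - (if k = j then d k else 0)" if "k < n" for k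
  proof -
    have "commutator (x k * d k) (d j) = - (commutator (d j) (x k) * d k)"
      using d_comm[OF that assms] unfolding commutator_def by (simp add: algebra_simps)
    then show ?thesis using d_x_commutator[OF assms that] by auto
  qed
  then have "commutator (\<Sum>k<n. x k * d k) (d j) = (\<Sum>k<n. - (if k = j then d k else 0))"
    unfolding commutator_sum_left by (intro sum.cong) auto
  also have "\<dots> = - d j" using assms by (simp add: sum_negf)
  finally show ?thesis .
qed

lemma commutator_number_Eop:
  "commutator (\<Sum>k<n. x k * d k) (Eop n eta c d) = - 2 * Eop n eta c d"
proof -
  have "commutator (\<Sum>k<n. x k * d k) (c (eta i j) * d j * d i) = - 2 * (c (eta i j) * d j * d i)"
    if "i < n" "j < n" for i j
  proof -
    have "commutator (\<Sum>k<n. x k * d k) (c (eta i j) * d j * d i)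
        = c (eta i j) * (commutator (\<Sum>k<n. x k * d k) (d j) * d i
            + d j * commutator (\<Sum>k<n. x k * d k) (d i))"
      by (simp only: mult.assoc commutator_scalar_right) (simp only: commutator_mult_right)
    also have "\<dots> = - 2 * (c (eta i j) * d j * d i)"
      using that by (simp add: commutator_number_d mult_2 right_diff_distrib mult.assoc)
    finally show ?thesis .
  qed
  then show ?thesis
    unfolding Eop_def
    by (simp add: commutator_scalar_right commutator_sum_right sum_distrib_left
        scalar_mult_left_commute)
qed

lemma commutator_Hop_Eop: "commutator (Hop n c x d) (Eop n eta c d) = 2 * Eop n eta c d"
proof -
  have "commutator (d k * x k + x k * d k) (Eop n eta c d) = 2 * commutator (x k * d k) (Eop n eta c d)"
    if "k < n" for k
  proof -
    have "d k * x k + x k * d k = 1 + (x k * d k + x k * d k)"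
      using d_x_commutator[OF that that] unfolding commutator_def by (simp add: algebra_simps)
    then show ?thesis by (simp add: commutator_add_left mult_2)
  qed
  then have "commutator (Hop n c x d) (Eop n eta c d)
      = c (- 1 / 2) * (2 * commutator (\<Sum>k<n. x k * d k) (Eop n eta c d))"
    unfolding Hop_def commutator_scalar_left commutator_sum_left by (simp add: sum_distrib_left)
  also have "\<dots> = c (- 1 / 2) * (c (- 4) * Eop n eta c d)"
    by (simp add: commutator_number_Eop scalar_minus mult.assoc[symmetric])
  also have "\<dots> = 2 * Eop n eta c d"
    by (simp add: scalar_mult_assoc)
  finally show ?thesis .
qed

lemma Eop_Hop: "Eop n eta c d * Hop n c x d = (Hop n c x d + of_int (- 2)) * Eop n eta c d"
  using commutator_Hop_Eop unfolding commutator_def by (simp add: algebra_simps)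

end

section \<open>Local finiteness modulo A X + A E\<close>

definition left_ideal :: "'a::ring_1 set \<Rightarrow> bool" where
  "left_ideal I \<longleftrightarrow>
     0 \<in> I \<and> (\<forall>p\<in>I. \<forall>q\<in>I. p + q \<in> I) \<and> (\<forall>r. \<forall>p\<in>I. r * p \<in> I)"

lemma left_ideal_left_ideal2: "left_ideal (left_ideal2 X E)"
  unfolding left_ideal_def
proof (intro conjI ballI allI)
  show "0 \<in> left_ideal2 X E"
    unfolding left_ideal2_def by (auto intro!: exI[of _ 0])
next
  fix p q assume "p \<in> left_ideal2 X E" "q \<in> left_ideal2 X E"
  then obtain a b a' b' where "p = a * X + b * E" "q = a' * X + b' * E"
    unfolding left_ideal2_def by blast
  then have "p + q = (a + a') * X + (b + b') * E" by (simp add: algebra_simps)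
  then show "p + q \<in> left_ideal2 X E" unfolding left_ideal2_def by blast
next
  fix r p assume "p \<in> left_ideal2 X E"
  then obtain a b where "p = a * X + b * E" unfolding left_ideal2_def by blast
  then have "r * p = (r * a) * X + (r * b) * E" by (simp add: algebra_simps)
  then show "r * p \<in> left_ideal2 X E" unfolding left_ideal2_def by blast
qed

lemma mult_right_in_left_ideal2: "r * E \<in> left_ideal2 X E"
  unfolding left_ideal2_def by (intro CollectI exI[of _ 0] exI[of _ r]) simp

context scalar_emb
begin

definition span_mod :: "'a set \<Rightarrow> 'a set \<Rightarrow> 'a set" where
  "span_mod I B = {v. \<exists>f. v - (\<Sum>b\<in>B. c (f b) * b) \<in> I}"

context
  fixes I B :: "'a set"
  assumes I: "left_ideal I" and B: "finite B"
begin

lemma span_mod_ideal: "p \<in> I \<Longrightarrow> p \<in> span_mod I B"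
  unfolding span_mod_def by (intro CollectI exI[of _ "\<lambda>_. 0"]) simp

lemma span_mod_base: "b \<in> B \<Longrightarrow> b \<in> span_mod I B"
proof -
  assume "b \<in> B"
  then have "(\<Sum>b'\<in>B. c (if b' = b then 1 else 0) * b') = (\<Sum>b'\<in>B. if b' = b then b' else 0)"
    by (intro sum.cong) auto
  also have "\<dots> = b" using B \<open>b \<in> B\<close> by simp
  finally have "b - (\<Sum>b'\<in>B. c (if b' = b then 1 else 0) * b') = 0" by simp
  then show ?thesis
    using I unfolding span_mod_def left_ideal_def
    by (intro CollectI exI[of _ "\<lambda>b'. if b' = b then 1 else 0"]) simp
qed

lemma span_mod_add: "p \<in> span_mod I B \<Longrightarrow> q \<in> span_mod I B \<Longrightarrow> p + q \<in> span_mod I B"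
proof -
  assume "p \<in> span_mod I B" "q \<in> span_mod I B"
  then obtain f f' where "p - (\<Sum>b\<in>B. c (f b) * b) \<in> I" "q - (\<Sum>b\<in>B. c (f' b) * b) \<in> I"
    unfolding span_mod_def by blast
  then have "(p - (\<Sum>b\<in>B. c (f b) * b)) + (q - (\<Sum>b\<in>B. c (f' b) * b)) \<in> I"
    using I unfolding left_ideal_def by blast
  moreover have "(p - (\<Sum>b\<in>B. c (f b) * b)) + (q - (\<Sum>b\<in>B. c (f' b) * b))
      = p + q - (\<Sum>b\<in>B. c (f b + f' b) * b)"
    by (simp add: scalar_add distrib_right sum.distrib)
  ultimately show ?thesis unfolding span_mod_def by auto
qed

lemma span_mod_sum: "(\<And>i. i \<in> S \<Longrightarrow> F i \<in> span_mod I B) \<Longrightarrow> sum F S \<in> span_mod I B"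
proof (induction S rule: infinite_finite_induct)
  case (infinite S)
  then show ?case using I by (simp add: span_mod_ideal left_ideal_def)
next
  case empty
  then show ?case using I by (simp add: span_mod_ideal left_ideal_def)
next
  case (insert i S)
  then show ?case by (simp add: span_mod_add)
qed

lemma span_mod_scalar: "v \<in> span_mod I B \<Longrightarrow> c a * v \<in> span_mod I B"
proof -
  assume "v \<in> span_mod I B"
  then obtain f where "v - (\<Sum>b\<in>B. c (f b) * b) \<in> I"
    unfolding span_mod_def by blast
  then have "c a * (v - (\<Sum>b\<in>B. c (f b) * b)) \<in> I"
    using I unfolding left_ideal_def by blast
  then have "c a * v - (\<Sum>b\<in>B. c (a * f b) * b) \<in> I"
    by (simp add: right_diff_distrib sum_distrib_left scalar_mult_assoc)
  then show ?thesis unfolding span_mod_def by (intro CollectI exI[of _ "\<lambda>b. a * f b"])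
qed

lemma span_mod_left_mult:
  assumes "\<And>b. b \<in> B \<Longrightarrow> p * b \<in> span_mod I B" and "v \<in> span_mod I B"
  shows "p * v \<in> span_mod I B"
proof -
  obtain f where f: "v - (\<Sum>b\<in>B. c (f b) * b) \<in> I"
    using assms(2) unfolding span_mod_def by blast
  have "p * v = (\<Sum>b\<in>B. p * (c (f b) * b)) + p * (v - (\<Sum>b\<in>B. c (f b) * b))"
    by (simp add: right_diff_distrib sum_distrib_left)
  also have "\<dots> = (\<Sum>b\<in>B. c (f b) * (p * b)) + p * (v - (\<Sum>b\<in>B. c (f b) * b))"
    by (simp only: scalar_mult_left_commute)
  finally have v: "p * v = (\<Sum>b\<in>B. c (f b) * (p * b)) + p * (v - (\<Sum>b\<in>B. c (f b) * b))" .
  have "p * (v - (\<Sum>b\<in>B. c (f b) * b)) \<in> I"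
    using f I unfolding left_ideal_def by blast
  then show ?thesis
    unfolding v by (intro span_mod_add span_mod_sum span_mod_scalar span_mod_ideal assms(1))
qed

lemma gen_alg_mult_span_mod:
  assumes "u \<in> gen_alg c G" and "\<And>p b. p \<in> G \<Longrightarrow> b \<in> B \<Longrightarrow> p * b \<in> span_mod I B"
  shows "v \<in> span_mod I B \<Longrightarrow> u * v \<in> span_mod I B"
  using assms(1)
proof (induction u arbitrary: v rule: gen_alg.induct)
  case (scal z)
  then show ?case by (rule span_mod_scalar)
next
  case (gen p)
  then show ?case using assms(2) by (blast intro: span_mod_left_mult)
next
  case (add a b)
  then show ?case by (simp add: distrib_right span_mod_add)
next
  case (mult a b)
  then show ?case by (simp add: mult.assoc)
qed

end

end

definition power_orbit :: "'a::ring_1 \<Rightarrow> 'a \<Rightarrow> 'a \<Rightarrow> nat \<Rightarrow> 'a set" where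
  "power_orbit X E w K = (\<lambda>k. E ^ k * w) ` {..<K} \<union> (\<lambda>k. X * E ^ k * w) ` {..<K}"

context scalar_emb
begin

context
  fixes X E w z :: 'a and K :: nat
  assumes XX: "X * X = E" and K: "E ^ K * w = z * E"
begin

lemma power_orbit_span_mod:
  assumes "k \<le> K"
  shows "E ^ k * w \<in> span_mod (left_ideal2 X E) (power_orbit X E w K)"
    and "X * E ^ k * w \<in> span_mod (left_ideal2 X E) (power_orbit X E w K)"
proof -
  have I: "left_ideal (left_ideal2 X E)" and B: "finite (power_orbit X E w K)"
    unfolding power_orbit_def by (simp_all add: left_ideal_left_ideal2)
  show "E ^ k * w \<in> span_mod (left_ideal2 X E) (power_orbit X E w K)"
  proof (cases "k = K")
    case True
    then show ?thesis using K I B by (simp add: span_mod_ideal mult_right_in_left_ideal2)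
  next
    case False
    then show ?thesis using assms I B unfolding power_orbit_def by (intro span_mod_base) auto
  qed
  show "X * E ^ k * w \<in> span_mod (left_ideal2 X E) (power_orbit X E w K)"
  proof (cases "k = K")
    case True
    then have "X * E ^ k * w = (X * z) * E" using K by (simp add: mult.assoc)
    then show ?thesis using I B by (simp add: span_mod_ideal mult_right_in_left_ideal2)
  next
    case False
    then show ?thesis using assms I B unfolding power_orbit_def by (intro span_mod_base) auto
  qed
qed

lemma mult_power_orbit_span_mod:
  assumes "p \<in> {X, E}" and "b \<in> power_orbit X E w K"
  shows "p * b \<in> span_mod (left_ideal2 X E) (power_orbit X E w K)"
proof -
  have EX: "E * X = X * E" unfolding XX[symmetric] by (simp add: mult.assoc)
  obtain k where "k < K" and b: "b = E ^ k * w \<or> b = X * E ^ k * w"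
    using assms(2) unfolding power_orbit_def by blast
  have "X * (E ^ k * w) = X * E ^ k * w" by (simp only: mult.assoc)
  moreover have "X * (X * E ^ k * w) = E ^ Suc k * w"
    by (simp only: mult.assoc[symmetric] XX power_Suc)
  moreover have "E * (E ^ k * w) = E ^ Suc k * w"
    by (simp only: mult.assoc power_Suc)
  moreover have "E * (X * E ^ k * w) = X * E ^ Suc k * w"
    by (simp only: mult.assoc[symmetric] EX power_Suc)
  ultimately show ?thesis
    using assms(1) b \<open>k < K\<close> power_orbit_span_mod[of k] power_orbit_span_mod[of "Suc k"]
    by (elim insertE disjE) (simp_all del: power_Suc)
qed

end

lemma locally_finite_quot_if_powers_in_ideal:
  assumes "X * X = E" and "\<And>w. \<exists>K z. E ^ K * w = z * E"
  shows "locally_finite_quot c X E (left_ideal2 X E)"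
  unfolding locally_finite_quot_def
proof
  fix w
  obtain K z where K: "E ^ K * w = z * E" using assms(2) by blast
  have "u * w \<in> span_mod (left_ideal2 X E) (power_orbit X E w K)" if "u \<in> gen_alg c {X, E}" for u
    using left_ideal_left_ideal2 _ that
  proof (rule gen_alg_mult_span_mod)
    show "finite (power_orbit X E w K)" unfolding power_orbit_def by simp
    show "w \<in> span_mod (left_ideal2 X E) (power_orbit X E w K)"
      using power_orbit_span_mod(1)[OF assms(1) K, of 0] by simp
  qed (rule mult_power_orbit_span_mod[OF assms(1) K])
  moreover have "finite (power_orbit X E w K)" unfolding power_orbit_def by simp
  ultimately show "\<exists>B. finite B \<and>
      (\<forall>u\<in>gen_alg c {X, E}. \<exists>f. u * w - (\<Sum>b\<in>B. c (f b) * b) \<in> left_ideal2 X E)"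
    unfolding span_mod_def by blast
qed

end

section \<open>Localisation\<close>

lemma localization_inverse:
  assumes "is_localization D phi" and "s \<in> D" and "t * phi s = 1"
  shows "phi s * t = 1"
proof -
  obtain t' where "t' * phi s = 1" and "phi s * t' = 1"
    using assms(1,2) unfolding is_localization_def by blast
  then have "t = t'" using \<open>t * phi s = 1\<close> by (metis mult.assoc mult_1_left mult_1_right)
  then show ?thesis using \<open>phi s * t' = 1\<close> by simp
qed

lemma scalar_emb_comp_localization:
  assumes "is_scalar_emb c" and "is_localization D phi"
  shows "is_scalar_emb (phi \<circ> c)"
proof -
  interpret scalar_emb c by (rule scalar_emb.intro) fact
  have phi_one: "phi 1 = 1" and phi_add: "\<And>a b. phi (a + b) = phi a + phi b"
    and phi_mult: "\<And>a b. phi (a * b) = phi a * phi b"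
    and phi_frac: "\<And>y. \<exists>s\<in>D. \<exists>a t. t * phi s = 1 \<and> y = t * phi a"
    using assms(2) unfolding is_localization_def by blast+
  have central: "phi (c z) * y = y * phi (c z)" for z y
  proof -
    obtain s a t where "s \<in> D" "t * phi s = 1" and y: "y = t * phi a" using phi_frac by blast
    then have "phi s * t = 1" using assms(2) localization_inverse by blast
    have comm: "phi (c z) * phi b = phi b * phi (c z)" for b
      by (simp flip: phi_mult add: scalar_central)
    have "phi (c z) * t = t * phi s * phi (c z) * t" using \<open>t * phi s = 1\<close> by simp
    also have "\<dots> = t * (phi s * phi (c z)) * t" by (simp only: mult.assoc)
    also have "\<dots> = t * phi (c z) * (phi s * t)" by (subst comm[of s, symmetric]) (simp only: mult.assoc)
    finally have "phi (c z) * t = t * phi (c z)" using \<open>phi s * t = 1\<close> by simp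
    then have "phi (c z) * (t * phi a) = t * (phi (c z) * phi a)" by (metis mult.assoc)
    also have "\<dots> = t * (phi a * phi (c z))" by (subst comm) (rule refl)
    finally show ?thesis unfolding y by (simp only: mult.assoc)
  qed
  show ?thesis
    unfolding is_scalar_emb_def comp_def
    by (intro conjI allI central) (simp_all add: phi_one phi_add phi_mult scalar_add scalar_mult)
qed

lemma power_mult_shift:
  fixes e :: "'a::monoid_mult"
  assumes shift: "\<And>s. s \<in> S \<Longrightarrow> \<exists>s'\<in>S. e * s = s' * e"
  shows "s \<in> S \<Longrightarrow> \<exists>s'\<in>S. e ^ m * s = s' * e ^ m"
proof (induction m arbitrary: s)
  case 0
  then show ?case by auto
next
  case (Suc m)
  obtain s' where "s' \<in> S" and s': "e * s = s' * e" using shift[OF Suc.prems] by blast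
  obtain s'' where "s'' \<in> S" and s'': "e ^ m * s' = s'' * e ^ m"
    using Suc.IH[OF \<open>s' \<in> S\<close>] by blast
  have "e ^ Suc m * s = e ^ m * (e * s)" by (simp only: power_Suc2 mult.assoc)
  also have "\<dots> = (e ^ m * s') * e" by (simp only: s' mult.assoc)
  also have "\<dots> = s'' * e ^ Suc m" by (simp only: s'' power_Suc2 mult.assoc)
  finally show ?case using \<open>s'' \<in> S\<close> by blast
qed

lemma localization_power_right_multiple:
  assumes loc: "is_localization D phi"
    and shift: "\<And>s. s \<in> D \<Longrightarrow> \<exists>s'\<in>D. e * s = s' * e"
    and reach: "\<And>a. \<exists>K b. e ^ K * a = b * e"
  shows "\<exists>K z. phi e ^ K * y = z * phi e"
proof -
  have phi_one: "phi 1 = 1" and phi_mult: "\<And>a b. phi (a * b) = phi a * phi b"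
    and phi_inv: "\<And>s. s \<in> D \<Longrightarrow> \<exists>t. t * phi s = 1 \<and> phi s * t = 1"
    and phi_frac: "\<exists>s\<in>D. \<exists>a t. t * phi s = 1 \<and> y = t * phi a"
    using loc unfolding is_localization_def by blast+
  have phi_power: "phi (e ^ K) = phi e ^ K" for K
    by (induction K) (simp_all add: phi_one phi_mult)
  obtain s a t where "s \<in> D" "t * phi s = 1" and y: "y = t * phi a"
    using phi_frac by blast
  then have "phi s * t = 1" using loc localization_inverse by blast
  obtain K b where b: "e ^ K * a = b * e" using reach by blast
  obtain s' where "s' \<in> D" and s': "e ^ K * s = s' * e ^ K"
    using power_mult_shift[OF shift \<open>s \<in> D\<close>] by blast
  obtain t' where "t' * phi s' = 1" using phi_inv[OF \<open>s' \<in> D\<close>] by blast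
  have "phi e ^ K * t = t' * phi (s' * e ^ K) * t"
    using \<open>t' * phi s' = 1\<close> by (simp add: phi_mult phi_power flip: mult.assoc)
  also have "\<dots> = t' * phi e ^ K * (phi s * t)"
    by (simp add: phi_mult phi_power mult.assoc flip: s')
  finally have "phi e ^ K * t = t' * phi e ^ K" using \<open>phi s * t = 1\<close> by simp
  then have "phi e ^ K * y = t' * phi (e ^ K * a)"
    unfolding y by (simp add: phi_mult phi_power flip: mult.assoc)
  also have "\<dots> = (t' * phi b) * phi e"
    by (simp add: b phi_mult mult.assoc)
  finally show ?thesis by blast
qed

theorem proposition3p4:
  fixes n :: nat and eta :: "nat \<Rightarrow> nat \<Rightarrow> complex"
    and c :: "complex \<Rightarrow> 'w::ring_1" and x d g :: "nat \<Rightarrow> 'w"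
    and phi :: "'w \<Rightarrow> 'l::ring_1"
  assumes "n \<ge> 1"
    and "sym_invertible n eta"
    and "is_W n eta c x d g"
    and "is_localization (Dset (Hop n c x d)) phi"
  shows "locally_finite_quot (phi \<circ> c) (phi (Xop n c d g)) (phi (Eop n eta c d))
           (left_ideal2 (phi (Xop n c d g)) (phi (Eop n eta c d)))"
proof -
  have emb: "is_scalar_emb c" and rel: "W_relations n eta c x d g"
    and gen: "gen_alg c (x ` {..<n} \<union> d ` {..<n} \<union> g ` {..<n}) = UNIV"
    using assms(3) unfolding is_W_def by auto
  interpret W_rels c n eta x d g
    using emb rel by (simp add: W_rels_def W_rels_axioms_def scalar_emb_def)
  interpret quot: scalar_emb "phi \<circ> c"
    using scalar_emb_comp_localization[OF emb assms(4)] by (rule scalar_emb.intro)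
  have phi_mult: "phi (a * b) = phi a * phi b" for a b
    using assms(4) unfolding is_localization_def by blast
  have shift: "\<exists>s'\<in>Dset (Hop n c x d). Eop n eta c d * s = s' * Eop n eta c d"
    if "s \<in> Dset (Hop n c x d)" for s
    using Dset_shift[OF Eop_Hop that] .
  have reach: "\<exists>K b. Eop n eta c d ^ K * a = b * Eop n eta c d" for a
    by (rule absorbs_powers_right_multiple, rule absorbs_powers_Eop) (simp add: gen)
  have "phi (Xop n c d g) * phi (Xop n c d g) = phi (Eop n eta c d)"
    by (simp flip: phi_mult add: Xop_square)
  then show ?thesis
    using localization_power_right_multiple[OF assms(4) shift reach]
    by (rule quot.locally_finite_quot_if_powers_in_ideal)
qed

end
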